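(* Let $B\subseteq\mathbb{R}^n$ be a bounded set and let $V_0,V_1,\dots$ be nonempty finite subsets of $B$. Suppose there are $C^\star>0$ and $r_0>0$ such that for every $k\geq1$ and every $v_k\in V_k$ there exists $v_{k-1}\in V_{k-1}$ with $|v_{k-1}-v_k|<C^\star2^{-k}r_0$. Then $V_k$ converges in the Hausdorff metric to a compact set $V\subseteq\overline{B}$. *)

theory Defs
  imports "HOL-Analysis.Analysis"
begin

definition hausdorff_dist :: "'a::metric_space set \<Rightarrow> 'a set \<Rightarrow> real" where
  "hausdorff_dist A B = max (SUP a\<in>A. infdist a B) (SUP b\<in>B. infdist b A)"

end

theory Submission
  imports Defs
begin

text \<open>The limit set is the topological upper limit of the sequence, the intersection of the
  closures of its tails. Every point of a late \<open>V k\<close> is close to this set, because otherwise a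
  nested family of nonempty compact sets of points far from it would have a common point, which
  must lie in the set itself. Conversely, chaining the hypothesis downwards shows that every
  point of \<open>V l\<close>, \<open>l \<ge> k\<close>, lies within the geometric tail \<open>C\<^sup>\<star> r\<^sub>0 2\<^sup>-\<^sup>k\<close> of \<open>V k\<close>; this bound
  passes to the closures of the tails and hence to the limit set.\<close>

lemma dist_geometric_chain:
  fixes V :: "nat \<Rightarrow> 'a::metric_space set"
  assumes step: "\<And>i v. v \<in> V (Suc i) \<Longrightarrow> \<exists>u\<in>V i. dist v u \<le> c * (1/2) ^ Suc i"
    and "j \<le> k" "v \<in> V k"
  shows "\<exists>w\<in>V j. dist v w \<le> c * ((1/2) ^ j - (1/2) ^ k)"
  using \<open>j \<le> k\<close> \<open>v \<in> V k\<close>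
proof (induction k arbitrary: v rule: dec_induct)
  case base
  then show ?case by auto
next
  case (step k)
  obtain u where u: "u \<in> V k" and du: "dist v u \<le> c * (1/2) ^ Suc k"
    using assms(1) step.prems by blast
  obtain w where w: "w \<in> V j" and dw: "dist u w \<le> c * ((1/2) ^ j - (1/2) ^ k)"
    using step.IH u by blast
  have "dist v w \<le> dist v u + dist u w" by (rule dist_triangle)
  also have "\<dots> \<le> c * ((1/2) ^ j - (1/2) ^ Suc k)"
    using du dw by (simp add: algebra_simps)
  finally show ?case using w by blast
qed

lemma infdist_geometric_chain_le:
  fixes V :: "nat \<Rightarrow> 'a::metric_space set"
  assumes "\<And>i v. v \<in> V (Suc i) \<Longrightarrow> \<exists>u\<in>V i. dist v u \<le> c * (1/2) ^ Suc i"
    and "c \<ge> 0" "j \<le> k" "v \<in> V k"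
  shows "infdist v (V j) \<le> c * (1/2) ^ j"
proof -
  obtain w where "w \<in> V j" and "dist v w \<le> c * ((1/2) ^ j - (1/2) ^ k)"
    using dist_geometric_chain[OF assms(1,3,4)] by blast
  moreover have "c * ((1/2) ^ j - (1/2) ^ k) \<le> c * (1/2) ^ j"
    using \<open>c \<ge> 0\<close> by (intro mult_left_mono) auto
  ultimately show ?thesis by (meson infdist_le order_trans)
qed

definition kuratowski_limsup :: "(nat \<Rightarrow> 'a::topological_space set) \<Rightarrow> 'a set" where
  "kuratowski_limsup V = (\<Inter>j. closure (\<Union>k\<in>{j..}. V k))"

lemma closure_tail_antimono:
  fixes V :: "nat \<Rightarrow> 'a::topological_space set"
  shows "j \<le> l \<Longrightarrow> closure (\<Union>k\<in>{l..}. V k) \<subseteq> closure (\<Union>k\<in>{j..}. V k)"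
  by (intro closure_mono UN_mono) auto

lemma compact_closure_tail:
  fixes V :: "nat \<Rightarrow> 'a::heine_borel set"
  assumes "bounded (\<Union>k. V k)"
  shows "compact (closure (\<Union>k\<in>{j..}. V k))"
  using assms by (meson Union_mono bounded_subset compact_closure image_mono subset_UNIV)

lemma compact_kuratowski_limsup:
  fixes V :: "nat \<Rightarrow> 'a::heine_borel set"
  assumes "bounded (\<Union>k. V k)"
  shows "compact (kuratowski_limsup V)"
  unfolding kuratowski_limsup_def
  using compact_closure_tail[OF assms] by (intro compact_Inter) auto

lemma kuratowski_limsup_nonempty:
  fixes V :: "nat \<Rightarrow> 'a::heine_borel set"
  assumes "bounded (\<Union>k. V k)" "\<And>k. V k \<noteq> {}"
  shows "kuratowski_limsup V \<noteq> {}"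
  unfolding kuratowski_limsup_def
proof (rule compact_nest)
  show "compact (closure (\<Union>k\<in>{j..}. V k))" for j
    by (rule compact_closure_tail[OF assms(1)])
  show "closure (\<Union>k\<in>{j..}. V k) \<noteq> {}" for j
    using assms(2)[of j] by auto
qed (rule closure_tail_antimono)

lemma kuratowski_limsup_subset_closure:
  "(\<And>k. V k \<subseteq> S) \<Longrightarrow> kuratowski_limsup V \<subseteq> closure S"
  unfolding kuratowski_limsup_def by (meson INT_lower UNIV_I UN_least closure_mono order_trans)

lemma infdist_kuratowski_limsup_le:
  assumes "\<And>k v. j \<le> k \<Longrightarrow> v \<in> V k \<Longrightarrow> infdist v A \<le> e"
    and "w \<in> kuratowski_limsup V"
  shows "infdist w A \<le> e"
proof -
  have "closure (\<Union>k\<in>{j..}. V k) \<subseteq> {x. infdist x A \<le> e}"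
    using assms(1)
    by (intro closure_minimal closed_Collect_le continuous_on_infdist continuous_on_id
        continuous_on_const) auto
  moreover have "w \<in> closure (\<Union>k\<in>{j..}. V k)"
    using assms(2) unfolding kuratowski_limsup_def by blast
  ultimately show ?thesis by blast
qed

lemma eventually_infdist_kuratowski_limsup_less:
  fixes V :: "nat \<Rightarrow> 'a::heine_borel set"
  assumes "bounded (\<Union>k. V k)" "d > 0"
  shows "eventually (\<lambda>k. \<forall>v\<in>V k. infdist v (kuratowski_limsup V) < d) sequentially"
proof (rule ccontr)
  let ?W = "kuratowski_limsup V"
  define K where "K j = closure (\<Union>k\<in>{j..}. V k) \<inter> {x. d \<le> infdist x ?W}" for j
  assume "\<not> ?thesis"
  then have far: "\<exists>k\<ge>j. \<exists>v\<in>V k. d \<le> infdist v ?W" for j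
    by (auto simp: eventually_sequentially not_less)
  have "\<Inter>(range K) \<noteq> {}"
  proof (rule compact_nest)
    show "compact (K j)" for j
      unfolding K_def using compact_closure_tail[OF assms(1)]
      by (intro compact_Int_closed closed_Collect_le continuous_on_infdist continuous_on_id
          continuous_on_const) auto
    show "K j \<noteq> {}" for j
      using far[of j] closure_subset unfolding K_def by fast
    show "K l \<subseteq> K j" if "j \<le> l" for j l
      unfolding K_def using closure_tail_antimono[OF that] by auto
  qed
  then obtain x where x: "\<And>j. x \<in> K j" by blast
  then have "x \<in> ?W"
    unfolding K_def kuratowski_limsup_def by blast
  moreover have "d \<le> infdist x ?W"
    using x[of 0] unfolding K_def by blast
  ultimately show False using \<open>d > 0\<close> by simp
qed

lemma hausdorff_dist_le:
  assumes "A \<noteq> {}" "B \<noteq> {}"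
    and "\<forall>a\<in>A. infdist a B \<le> e" "\<forall>b\<in>B. infdist b A \<le> e"
  shows "hausdorff_dist A B \<le> e"
  unfolding hausdorff_dist_def using assms by (auto intro!: cSUP_least)

lemma hausdorff_dist_nonneg:
  assumes "finite A" "A \<noteq> {}"
  shows "0 \<le> hausdorff_dist A B"
proof -
  obtain a where "a \<in> A" using assms(2) by blast
  then have "infdist a B \<le> (SUP a\<in>A. infdist a B)"
    using assms(1) by (intro cSUP_upper) auto
  then show ?thesis
    unfolding hausdorff_dist_def using infdist_nonneg[of a B] by linarith
qed

lemma hausdorff_dist_tendsto_zero:
  assumes "\<And>k. finite (A k)" "\<And>k. A k \<noteq> {}" "B \<noteq> {}"
    and "\<And>e. e > 0 \<Longrightarrow> eventually (\<lambda>k. \<forall>a\<in>A k. infdist a B \<le> e) sequentially"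
    and "\<And>e. e > 0 \<Longrightarrow> eventually (\<lambda>k. \<forall>b\<in>B. infdist b (A k) \<le> e) sequentially"
  shows "(\<lambda>k. hausdorff_dist (A k) B) \<longlonglongrightarrow> 0"
proof (rule order_tendstoI)
  show "eventually (\<lambda>k. e < hausdorff_dist (A k) B) sequentially" if "e < 0" for e
    using that hausdorff_dist_nonneg[OF assms(1,2), of _ B]
    by (intro always_eventually allI) (meson less_le_trans)
  show "eventually (\<lambda>k. hausdorff_dist (A k) B < e) sequentially" if "e > 0" for e
  proof -
    have "eventually (\<lambda>k. hausdorff_dist (A k) B \<le> e / 2) sequentially"
    proof (rule eventually_mono)
      show "eventually (\<lambda>k. (\<forall>a\<in>A k. infdist a B \<le> e / 2) \<and>
          (\<forall>b\<in>B. infdist b (A k) \<le> e / 2)) sequentially"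
        using \<open>e > 0\<close> by (intro eventually_conj assms(4,5)) auto
      show "hausdorff_dist (A k) B \<le> e / 2"
        if "(\<forall>a\<in>A k. infdist a B \<le> e / 2) \<and> (\<forall>b\<in>B. infdist b (A k) \<le> e / 2)" for k
        using that assms(2,3) by (intro hausdorff_dist_le) auto
    qed
    then show ?thesis
      by (rule eventually_mono) (use \<open>e > 0\<close> in linarith)
  qed
qed

lemma infdist_kuratowski_limsup_geometric_le:
  fixes V :: "nat \<Rightarrow> 'a::metric_space set"
  assumes "\<And>i v. v \<in> V (Suc i) \<Longrightarrow> \<exists>u\<in>V i. dist v u \<le> c * (1/2) ^ Suc i"
    and "c \<ge> 0" "w \<in> kuratowski_limsup V"
  shows "infdist w (V k) \<le> c * (1/2) ^ k"
proof -
  have "infdist v (V k) \<le> c * (1/2) ^ k" if "k \<le> l" "v \<in> V l" for l v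
    by (rule infdist_geometric_chain_le[OF assms(1,2) that])
  then show ?thesis
    using assms(3) by (rule infdist_kuratowski_limsup_le)
qed

lemma hausdorff_dist_kuratowski_limsup_tendsto_zero:
  fixes V :: "nat \<Rightarrow> 'a::heine_borel set"
  assumes "bounded (\<Union>k. V k)" "\<And>k. finite (V k)" "\<And>k. V k \<noteq> {}"
    and step: "\<And>i v. v \<in> V (Suc i) \<Longrightarrow> \<exists>u\<in>V i. dist v u \<le> c * (1/2) ^ Suc i"
    and "c \<ge> 0"
  shows "(\<lambda>k. hausdorff_dist (V k) (kuratowski_limsup V)) \<longlonglongrightarrow> 0"
proof (rule hausdorff_dist_tendsto_zero[OF assms(2,3)])
  let ?W = "kuratowski_limsup V"
  show "?W \<noteq> {}"
    by (rule kuratowski_limsup_nonempty[OF assms(1,3)])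
  show "eventually (\<lambda>k. \<forall>v\<in>V k. infdist v ?W \<le> e) sequentially" if "e > 0" for e
    using eventually_infdist_kuratowski_limsup_less[OF assms(1) that]
    by (rule eventually_mono) (auto intro: less_imp_le)
  have geometric_to_zero: "(\<lambda>k. c * (1/2) ^ k) \<longlonglongrightarrow> 0"
    by (intro tendsto_mult_right_zero LIMSEQ_power_zero) auto
  show "eventually (\<lambda>k. \<forall>w\<in>?W. infdist w (V k) \<le> e) sequentially" if "e > 0" for e
    using order_tendstoD(2)[OF geometric_to_zero that]
  proof (rule eventually_mono)
    show "\<forall>w\<in>?W. infdist w (V k) \<le> e" if "c * (1/2) ^ k < e" for k
    proof
      fix w assume "w \<in> ?W"
      have "infdist w (V k) \<le> c * (1/2) ^ k"
        by (rule infdist_kuratowski_limsup_geometric_le) (fact step, fact, fact)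
      with that show "infdist w (V k) \<le> e" by linarith
    qed
  qed
qed

theorem lemma8p2:
  fixes B :: "'a::euclidean_space set"
    and V :: "nat \<Rightarrow> 'a set"
    and Cstar r0 :: real
  assumes "bounded B"
    and "\<And>k. finite (V k)"
    and "\<And>k. V k \<noteq> {}"
    and "\<And>k. V k \<subseteq> B"
    and "Cstar > 0" and "r0 > 0"
    and "\<And>k v. k \<ge> 1 \<Longrightarrow> v \<in> V k \<Longrightarrow>
           \<exists>w \<in> V (k - 1). norm (w - v) < Cstar * (1/2) ^ k * r0"
  shows "\<exists>W. compact W \<and> W \<noteq> {} \<and> W \<subseteq> closure B \<and>
             (\<lambda>k. hausdorff_dist (V k) W) \<longlonglongrightarrow> 0"
proof (intro exI[of _ "kuratowski_limsup V"] conjI)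
  have bdd: "bounded (\<Union>k. V k)"
    using assms(1,4) by (meson UN_least bounded_subset)
  have step: "\<exists>u\<in>V i. dist v u \<le> Cstar * r0 * (1/2) ^ Suc i" if "v \<in> V (Suc i)" for i v
  proof -
    have "1 \<le> Suc i" by simp
    from assms(7)[OF this that] obtain u
      where "u \<in> V (Suc i - 1)" "norm (u - v) < Cstar * (1/2) ^ Suc i * r0" ..
    then show ?thesis
      by (intro bexI[of _ u]) (simp_all add: dist_norm norm_minus_commute mult_ac)
  qed
  show "(\<lambda>k. hausdorff_dist (V k) (kuratowski_limsup V)) \<longlonglongrightarrow> 0"
    using assms(5,6)
    by (intro hausdorff_dist_kuratowski_limsup_tendsto_zero[OF bdd assms(2,3) step]) auto
  show "compact (kuratowski_limsup V)"
    by (rule compact_kuratowski_limsup[OF bdd])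
  show "kuratowski_limsup V \<noteq> {}"
    by (rule kuratowski_limsup_nonempty[OF bdd assms(3)])
  show "kuratowski_limsup V \<subseteq> closure B"
    by (rule kuratowski_limsup_subset_closure[OF assms(4)])
qed

end
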